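(* Let $P$ be a definite program and $Q$ an atomic query. If $P$ is order-acceptable with respect to $\{Q\}$, then there exists a minimal quasi-ordering $\ge$ such that $P$ is order-acceptable with respect to $\{Q\}$ via $\ge$.
   Context: A quasi-ordering is a reflexive transitive relation $\ge$; its strict part is $s>t$ iff $s\ge t$ and not $t\ge s$; it is well-founded if there is no infinite chain $s_1>s_2>\cdots$. For a predicate symbol, $\mathit{rel}(A)$ denotes the predicate of atom $A$. Predicate $p$ refers to $q$ in $P$ if some clause has $p$ in its head and $q$ in its body; $p\sqsupseteq q$ is the transitive (not reflexive) closure of ``refers to''; $p\simeq q$ (mutually recursive) iff $p\sqsupseteq q$ and $q\sqsupseteq p$. $\mathrm{Call}(P,S)$ is the set of atoms $A$ such that a variant of $A$ is a selected atom in some branch of the LD-tree (leftmost selection) of $P\cup\{Q\}$ for some $Q\in S$. $P$ is order-acceptable with respect to a set $S$ of atomic queries via a well-founded quasi-ordering $\ge$ on $\mathrm{Call}(P,S)$ if for every $A\in\mathrm{Call}(P,S)$, every (renamed apart) clause $A'\leftarrow B_1,\dots,B_n$ of $P$ such that $\theta=\mathrm{mgu}(A,A')$ exists, every $B_i$ with $\mathit{rel}(B_i)\simeq\mathit{rel}(A)$, and every computed answer substitution $\sigma$ for $\leftarrow(B_1,\dots,B_{i-1})\theta$, we have $A>B_i\theta\sigma$. $P$ is order-acceptable w.r.t. $S$ if such a $\ge$ exists. A quasi-ordering $\ge$ such that $P$ is order-acceptable w.r.t. $\{Q\}$ via $\ge$ is minimal if there is no quasi-ordering $\ge_1\subsetneq\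 \ge$ (as sets of pairs) such that $P$ is order-acceptable w.r.t. $\{Q\}$ via $\ge_1$. *)

theory Defs
  imports Main "HOL-Library.Infinite_Typeclass"
begin

datatype ('f, 'v) trm = Var 'v | Fn 'f "('f, 'v) trm list"

datatype ('p, 'f, 'v) atom = Atom 'p "('f, 'v) trm list"

datatype ('p, 'f, 'v) clause = Clause "('p, 'f, 'v) atom" "('p, 'f, 'v) atom list"

type_synonym ('f, 'v) subst = "'v \<Rightarrow> ('f, 'v) trm"

fun subst_trm :: "('f, 'v) subst \<Rightarrow> ('f, 'v) trm \<Rightarrow> ('f, 'v) trm" where
  "subst_trm \<sigma> (Var x) = \<sigma> x"
| "subst_trm \<sigma> (Fn f ts) = Fn f (map (subst_trm \<sigma>) ts)"

fun vars_trm :: "('f, 'v) trm \<Rightarrow> 'v set" where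
  "vars_trm (Var x) = {x}"
| "vars_trm (Fn f ts) = \<Union> (set (map vars_trm ts))"

fun subst_atom :: "('f, 'v) subst \<Rightarrow> ('p, 'f, 'v) atom \<Rightarrow> ('p, 'f, 'v) atom" where
  "subst_atom \<sigma> (Atom p ts) = Atom p (map (subst_trm \<sigma>) ts)"

fun vars_atom :: "('p, 'f, 'v) atom \<Rightarrow> 'v set" where
  "vars_atom (Atom p ts) = \<Union> (set (map vars_trm ts))"

fun rel :: "('p, 'f, 'v) atom \<Rightarrow> 'p" where
  "rel (Atom p ts) = p"

definition vars_atoms :: "('p, 'f, 'v) atom list \<Rightarrow> 'v set" where
  "vars_atoms G = \<Union> (set (map vars_atom G))"

fun head :: "('p, 'f, 'v) clause \<Rightarrow> ('p, 'f, 'v) atom" where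
  "head (Clause H B) = H"

fun body :: "('p, 'f, 'v) clause \<Rightarrow> ('p, 'f, 'v) atom list" where
  "body (Clause H B) = B"

fun subst_clause :: "('f, 'v) subst \<Rightarrow> ('p, 'f, 'v) clause \<Rightarrow> ('p, 'f, 'v) clause" where
  "subst_clause \<sigma> (Clause H B) = Clause (subst_atom \<sigma> H) (map (subst_atom \<sigma>) B)"

fun vars_clause :: "('p, 'f, 'v) clause \<Rightarrow> 'v set" where
  "vars_clause (Clause H B) = vars_atom H \<union> vars_atoms B"

text \<open>Composition: first \<sigma>, then \<tau> (so that t(\<sigma> \<circ>s \<tau>) = (t\<sigma>)\<tau>).\<close>
definition subst_comp :: "('f, 'v) subst \<Rightarrow> ('f, 'v) subst \<Rightarrow> ('f, 'v) subst" (infixl "\<circ>s" 75) where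
  "\<sigma> \<circ>s \<tau> = (\<lambda>x. subst_trm \<tau> (\<sigma> x))"

definition restrict_subst :: "('f, 'v) subst \<Rightarrow> 'v set \<Rightarrow> ('f, 'v) subst" where
  "restrict_subst \<sigma> V = (\<lambda>x. if x \<in> V then \<sigma> x else Var x)"

definition unifier :: "('f, 'v) subst \<Rightarrow> ('p, 'f, 'v) atom \<Rightarrow> ('p, 'f, 'v) atom \<Rightarrow> bool" where
  "unifier \<theta> A B \<longleftrightarrow> subst_atom \<theta> A = subst_atom \<theta> B"

definition is_mgu :: "('f, 'v) subst \<Rightarrow> ('p, 'f, 'v) atom \<Rightarrow> ('p, 'f, 'v) atom \<Rightarrow> bool" where
  "is_mgu \<theta> A B \<longleftrightarrow> unifier \<theta> A B \<and> (\<forall>\<tau>. unifier \<tau> A B \<longrightarrow> (\<exists>\<delta>. \<tau> = \<theta> \<circ>s \<delta>))"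

definition renaming :: "('v \<Rightarrow> 'v) \<Rightarrow> ('f, 'v) subst" where
  "renaming \<rho> = (\<lambda>x. Var (\<rho> x))"

definition variant_atom :: "('p, 'f, 'v) atom \<Rightarrow> ('p, 'f, 'v) atom \<Rightarrow> bool" where
  "variant_atom A B \<longleftrightarrow> (\<exists>\<rho>. bij \<rho> \<and> A = subst_atom (renaming \<rho>) B)"

definition variant_clause :: "('p, 'f, 'v) clause \<Rightarrow> ('p, 'f, 'v) clause \<Rightarrow> bool" where
  "variant_clause c' c \<longleftrightarrow> (\<exists>\<rho>. bij \<rho> \<and> c' = subst_clause (renaming \<rho>) c)"

text \<open>A state is (current goal, accumulated substitution, set of variables used so far).
  The clause variant used in a step is renamed apart from all variables used so far.\<close>
inductive ld_step :: "('p, 'f, 'v) clause set \<Rightarrow>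
    ('p, 'f, 'v) atom list \<times> ('f, 'v) subst \<times> 'v set \<Rightarrow>
    ('p, 'f, 'v) atom list \<times> ('f, 'v) subst \<times> 'v set \<Rightarrow> bool" for P where
  "\<lbrakk> c \<in> P; variant_clause c' c; vars_clause c' \<inter> U = {};
     is_mgu \<mu> A (head c') \<rbrakk> \<Longrightarrow>
   ld_step P (A # Gs, \<theta>, U)
     (map (subst_atom \<mu>) (body c' @ Gs), \<theta> \<circ>s \<mu>,
      U \<union> vars_clause c' \<union> \<Union> ((\<lambda>x. vars_trm (\<mu> x)) ` (U \<union> vars_clause c')))"

text \<open>Computed answer substitution for the query G, where the derivation is started with
  the variables in U0 (together with those of G) considered as used.\<close>
definition cas :: "('p, 'f, 'v) clause set \<Rightarrow> ('p, 'f, 'v) atom list \<Rightarrow> 'v set \<Rightarrow> ('f, 'v) subst \<Rightarrow> bool" where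
  "cas P G U0 \<sigma> \<longleftrightarrow> (\<exists>\<theta> U. (ld_step P)\<^sup>*\<^sup>* (G, Var, U0 \<union> vars_atoms G) ([], \<theta>, U)
                          \<and> \<sigma> = restrict_subst \<theta> (vars_atoms G))"

definition Call :: "('p, 'f, 'v) clause set \<Rightarrow> ('p, 'f, 'v) atom set \<Rightarrow> ('p, 'f, 'v) atom set" where
  "Call P S = {A. \<exists>Q\<in>S. \<exists>B Gs \<theta> U. (ld_step P)\<^sup>*\<^sup>* ([Q], Var, vars_atom Q) (B # Gs, \<theta>, U)
                              \<and> variant_atom B A}"

definition refers_to :: "('p, 'f, 'v) clause set \<Rightarrow> ('p \<times> 'p) set" where
  "refers_to P = {(p, q). \<exists>c\<in>P. rel (head c) = p \<and> q \<in> rel ` set (body c)}"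

definition mutrec :: "('p, 'f, 'v) clause set \<Rightarrow> 'p \<Rightarrow> 'p \<Rightarrow> bool" where
  "mutrec P p q \<longleftrightarrow> (p, q) \<in> (refers_to P)\<^sup>+ \<and> (q, p) \<in> (refers_to P)\<^sup>+"

text \<open>ge is a set of pairs (s,t) meaning s \<ge> t.\<close>
definition strict_part :: "('a \<times> 'a) set \<Rightarrow> ('a \<times> 'a) set" where
  "strict_part ge = {(s, t). (s, t) \<in> ge \<and> (t, s) \<notin> ge}"

definition wf_quasi_order_on :: "'a set \<Rightarrow> ('a \<times> 'a) set \<Rightarrow> bool" where
  "wf_quasi_order_on C ge \<longleftrightarrow> ge \<subseteq> C \<times> C \<and> refl_on C ge \<and> trans ge
      \<and> wf ((strict_part ge)\<inverse>)"

definition order_acceptable_via ::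
  "('p, 'f, 'v) clause set \<Rightarrow> ('p, 'f, 'v) atom set \<Rightarrow> (('p, 'f, 'v) atom \<times> ('p, 'f, 'v) atom) set \<Rightarrow> bool" where
  "order_acceptable_via P S ge \<longleftrightarrow>
     wf_quasi_order_on (Call P S) ge \<and>
     (\<forall>A \<in> Call P S. \<forall>c \<in> P. \<forall>c' \<theta>.
        variant_clause c' c \<and> vars_clause c' \<inter> vars_atom A = {} \<and> is_mgu \<theta> A (head c') \<longrightarrow>
        (\<forall>i < length (body c'). mutrec P (rel (body c' ! i)) (rel A) \<longrightarrow>
           (\<forall>\<sigma>. cas P (map (subst_atom \<theta>) (take i (body c')))
                     (vars_atom A \<union> vars_clause (subst_clause \<theta> c')) \<sigma> \<longrightarrow>
                 (A, subst_atom \<sigma> (subst_atom \<theta> (body c' ! i))) \<in> strict_part ge)))"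

definition order_acceptable :: "('p, 'f, 'v) clause set \<Rightarrow> ('p, 'f, 'v) atom set \<Rightarrow> bool" where
  "order_acceptable P S \<longleftrightarrow> (\<exists>ge. order_acceptable_via P S ge)"

definition minimal_oa_ordering ::
  "('p, 'f, 'v) clause set \<Rightarrow> ('p, 'f, 'v) atom \<Rightarrow> (('p, 'f, 'v) atom \<times> ('p, 'f, 'v) atom) set \<Rightarrow> bool" where
  "minimal_oa_ordering P Q ge \<longleftrightarrow> order_acceptable_via P {Q} ge \<and>
     \<not> (\<exists>ge1. ge1 \<subset> ge \<and> order_acceptable_via P {Q} ge1)"

end

theory Submission
  imports Defs
begin

text \<open>Order-acceptability via \<open>\<ge>\<close> says exactly that \<open>\<ge>\<close> is a well-founded quasi-ordering
  on \<open>Call(P,{Q})\<close> whose strict part contains a fixed relation \<open>R\<close>, the pairs that the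
  acceptability condition requires to decrease. The reflexive-transitive closure of \<open>R\<close> on
  \<open>Call(P,{Q})\<close> is contained in every such ordering, and its strict part lies inside \<open>R\<^sup>+\<close>,
  hence inside the strict part of any witness, so it is again well-founded. Being the least
  admissible ordering, it is minimal.\<close>

definition required_decreases ::
  "('p, 'f, 'v) clause set \<Rightarrow> ('p, 'f, 'v) atom set \<Rightarrow> (('p, 'f, 'v) atom \<times> ('p, 'f, 'v) atom) set"
where
  "required_decreases P S = {(A, B). A \<in> Call P S \<and> (\<exists>c \<in> P. \<exists>c' \<theta> i \<sigma>.
        variant_clause c' c \<and> vars_clause c' \<inter> vars_atom A = {} \<and> is_mgu \<theta> A (head c') \<and>
        i < length (body c') \<and> mutrec P (rel (body c' ! i)) (rel A) \<and>
        cas P (map (subst_atom \<theta>) (take i (body c')))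
              (vars_atom A \<union> vars_clause (subst_clause \<theta> c')) \<sigma> \<and>
        B = subst_atom \<sigma> (subst_atom \<theta> (body c' ! i)))}"

lemma order_acceptable_via_iff:
  "order_acceptable_via P S ge \<longleftrightarrow>
     wf_quasi_order_on (Call P S) ge \<and> required_decreases P S \<subseteq> strict_part ge"
  unfolding order_acceptable_via_def required_decreases_def by blast

lemma strict_part_subset: "strict_part ge \<subseteq> ge"
  unfolding strict_part_def by auto

lemma trans_strict_part: "trans ge \<Longrightarrow> trans (strict_part ge)"
  unfolding trans_def strict_part_def by blast

definition refl_trancl_on :: "'a set \<Rightarrow> ('a \<times> 'a) set \<Rightarrow> ('a \<times> 'a) set" where
  "refl_trancl_on C R = Id_on C \<union> R\<^sup>+"

lemma refl_trancl_on_subset: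
  assumes "R \<subseteq> C \<times> C"
  shows "refl_trancl_on C R \<subseteq> C \<times> C"
  using trancl_subset_Sigma[OF assms] unfolding refl_trancl_on_def by auto

lemma refl_on_refl_trancl_on:
  assumes "R \<subseteq> C \<times> C"
  shows "refl_on C (refl_trancl_on C R)"
  using refl_trancl_on_subset[OF assms] unfolding refl_on_def refl_trancl_on_def by auto

lemma trans_refl_trancl_on: "trans (refl_trancl_on C R)"
  unfolding trans_def refl_trancl_on_def by (auto dest: trancl_trans)

lemma strict_part_refl_trancl_on: "strict_part (refl_trancl_on C R) \<subseteq> R\<^sup>+"
  unfolding strict_part_def refl_trancl_on_def by auto

lemma refl_trancl_on_least:
  assumes "refl_on C g" "trans g" "R \<subseteq> g"
  shows "refl_trancl_on C R \<subseteq> g"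
proof -
  have "R\<^sup>+ \<subseteq> g"
    using trancl_mono[of _ R g] trancl_id[OF assms(2)] assms(3) by blast
  then show ?thesis
    using assms(1) unfolding refl_trancl_on_def refl_on_def by auto
qed

lemma trancl_subset_strict_part:
  assumes "trans ge" "R \<subseteq> strict_part ge"
  shows "R\<^sup>+ \<subseteq> strict_part ge"
  using trancl_mono[of _ R "strict_part ge"] trancl_id[OF trans_strict_part[OF assms(1)]] assms(2)
  by blast

context
  fixes C :: "'a set" and R ge :: "('a \<times> 'a) set"
  assumes quasi_order: "wf_quasi_order_on C ge"
    and decreasing: "R \<subseteq> strict_part ge"
begin

lemma refl_trancl_on_subset_witness: "refl_trancl_on C R \<subseteq> ge"
  using quasi_order decreasing strict_part_subset
  by (intro refl_trancl_on_least) (auto simp: wf_quasi_order_on_def)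

lemma wf_quasi_order_on_refl_trancl_on: "wf_quasi_order_on C (refl_trancl_on C R)"
proof -
  have trans_ge: "trans ge" and R_in_C: "R \<subseteq> C \<times> C" and wf_ge: "wf ((strict_part ge)\<inverse>)"
    using quasi_order decreasing strict_part_subset unfolding wf_quasi_order_on_def by blast+
  have "strict_part (refl_trancl_on C R) \<subseteq> strict_part ge"
    using strict_part_refl_trancl_on trancl_subset_strict_part[OF trans_ge decreasing] by blast
  then have "wf ((strict_part (refl_trancl_on C R))\<inverse>)"
    using wf_ge by (meson converse_mono wf_subset)
  then show ?thesis
    unfolding wf_quasi_order_on_def
    using refl_trancl_on_subset[OF R_in_C] refl_on_refl_trancl_on[OF R_in_C]
      trans_refl_trancl_on by blast
qed

lemma decreasing_refl_trancl_on: "R \<subseteq> strict_part (refl_trancl_on C R)"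
  using decreasing refl_trancl_on_subset_witness unfolding strict_part_def refl_trancl_on_def
  by auto

end

theorem mainTheorem7:
  fixes P :: "('p, 'f, 'v :: infinite) clause set" and Q :: "('p, 'f, 'v) atom"
  assumes "finite P"
    and "order_acceptable P {Q}"
  shows "\<exists>ge. minimal_oa_ordering P Q ge"
proof -
  let ?C = "Call P {Q}" and ?R = "required_decreases P {Q}"
  obtain ge where "order_acceptable_via P {Q} ge"
    using assms(2) unfolding order_acceptable_def by blast
  then have "wf_quasi_order_on ?C ge" "?R \<subseteq> strict_part ge"
    by (simp_all add: order_acceptable_via_iff)
  then have least_acceptable: "order_acceptable_via P {Q} (refl_trancl_on ?C ?R)"
    by (simp add: order_acceptable_via_iff wf_quasi_order_on_refl_trancl_on
        decreasing_refl_trancl_on)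
  have "refl_trancl_on ?C ?R \<subseteq> ge1" if "order_acceptable_via P {Q} ge1" for ge1
    using that refl_trancl_on_subset_witness unfolding order_acceptable_via_iff by blast
  with least_acceptable have "minimal_oa_ordering P Q (refl_trancl_on ?C ?R)"
    unfolding minimal_oa_ordering_def by blast
  then show ?thesis ..
qed

end
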